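(* For every sequent $\Gamma\Rightarrow\Delta$ of compound diagrams: if $\Gamma\Rightarrow\Delta$ is provable in the calculus $\mathbf{C}$, then $\Gamma\Rightarrow\Delta$ is valid.
   Context: Fix a countably infinite set $\mathcal V$ of propositional variables. A Heyting algebra $\mathcal H=(H,\vee,\wedge,\to,0,1)$ is a bounded distributive lattice (order $\le$, join $\vee$, meet $\wedge$, bottom $0$, top $1$) with a binary operation $\to$ such that $c\wedge a\le b\iff c\le a\to b$. Write $-a:=a\to 0$; empty meets are $1$, empty joins are $0$. A valuation is a map $v:\mathcal V\to H$. Zones: for a finite set $L\subset\mathcal V$ (contours), a zone over $L$ is a pair $z=(\mathrm{in}(z),\mathrm{out}(z))$ of disjoint subsets of $L$ with union $L$; $\mathcal Z(L)$ is the set of all zones over $L$. Put $v(z)=\bigwedge_{c\in\mathrm{in}(z)}v(c)\wedge\bigwedge_{c\in\mathrm{out}(z)}-v(c)$ and $m_v(z)=\big(\bigwedge_{c\in\mathrm{in}(z)}v(c)\big)\to\big(\bigvee_{c\in\mathrm{out}(z)}v(c)\big)$. Unitary diagrams are of three syntactically distinct kinds. (i) Venn diagram $d=(L,\mathcal Z(L),S)$, $S=S(d)\subseteq\mathcal Z(L)$ the shaded zones, $[\![d]\!]_v=\bigvee_{z\in S}v(z)$. Special Venn diagrams: $\bot=(\emptyset,\{(\emptyset,\emptyset)\},\emptyset)$, $\top=(\emptyset,\{(\emptyset,\emptyset)\},\{(\emptyset,\emptyset)\})$, the positive literal $P_c=(\{c\},\mathcal Z(\{c\}),\{(\{c\},\emptyset)\})$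 and negative literal $N_c=(\{c\},\mathcal Z(\{c\}),\{(\emptyset,\{c\})\})$ for $c\in\mathcal V$. (ii) Pure Euler diagram $d=(L,Z)$, $Z\subseteq\mathcal Z(L)$ the visible zones, $M(d)=\mathcal Z(L)\setminus Z$ the missing zones, $[\![d]\!]_v=\bigwedge_{z\in M(d)}m_v(z)$. (iii) Euler–Venn diagram $d=(L,Z,S)$ with $Z\subseteq\mathcal Z(L)$, $S\subseteq Z$; $E(d)=(L,Z)$ (pure Euler), $V(d)=(L,\mathcal Z(L),S)$ (Venn), $[\![d]\!]_v=[\![E(d)]\!]_v\to[\![V(d)]\!]_v$. Compound diagrams: $D::=d\mid D\wedge D\mid D\vee D\mid D\to D$ ($d$ unitary), with $[\![D_1\wedge D_2]\!]_v=[\![D_1]\!]_v\wedge[\![D_2]\!]_v$, and similarly $\vee$, $\to$. For $c\in L$, $\mathrm{adj}(z,c)$ is the zone obtained from $z$ by moving $c$ from $\mathrm{out}(z)$ to $\mathrm{in}(z)$ or from $\mathrm{in}(z)$ to $\mathrm{out}(z)$. Reduction: $z\setminus c=(\mathrm{in}(z)\setminus\{c\},\mathrm{out}(z)\setminus\{c\})$, and for a pure Euler $d=(L,Z)$, $d\setminus c=(L\setminus\{c\},\{z\setminus c:z\in Z\})$ (pure Euler). A sequent $\Gamma\Rightarrow\Delta$ consists of finite multisets of compound diagrams; it is valid iff for every Heyting algebra and every valuation $v$, $\bigwedge_{D\in\Gamma}[\![D]\!]_v\le\bigvee_{E\in\Delta}[\![E]\!]_v$. The calculus $\mathbf C$ (premisses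 / conclusion; $\Gamma,\Delta$ arbitrary multisets, $D,E$ compound diagrams): Zero-premiss rules: axiom $P_c,\Gamma\Rightarrow\Delta,P_c$; $(\bot L)$ $\bot,\Gamma\Rightarrow\Delta$; $(\top R)$ $\Gamma\Rightarrow\Delta,\top$. $(\wedge L)$ $D,E,\Gamma\Rightarrow\Delta$ / $D\wedge E,\Gamma\Rightarrow\Delta$. $(\vee L)$ $D,\Gamma\Rightarrow\Delta$ and $E,\Gamma\Rightarrow\Delta$ / $D\vee E,\Gamma\Rightarrow\Delta$. $(\to L)$ $D\to E,\Gamma\Rightarrow D$ and $E,\Gamma\Rightarrow\Delta$ / $D\to E,\Gamma\Rightarrow\Delta$. $(\wedge R)$ $\Gamma\Rightarrow\Delta,D$ and $\Gamma\Rightarrow\Delta,E$ / $\Gamma\Rightarrow\Delta,D\wedge E$. $(\vee R)$ $\Gamma\Rightarrow\Delta,D,E$ / $\Gamma\Rightarrow\Delta,D\vee E$. $(\to R)$ $D,\Gamma\Rightarrow E$ / $\Gamma\Rightarrow\Delta,D\to E$. $(\mathrm{lit}L)$ $N_c,\Gamma\Rightarrow P_c$ / $N_c,\Gamma\Rightarrow\Delta$. $(\mathrm{lit}R)$ $P_c,\Gamma\Rightarrow$ (empty succedent) / $\Gamma\Rightarrow\Delta,N_c$. For a Venn $d=(L,\mathcal Z(L),S)$ with $|S|>1$ and $d_i=(L,\mathcal Z(L),S_i)$, $S_1\cup S_2=S$: $(\mathrm{sep}L)$ $d_1,\Gamma\Rightarrow\Delta$ and $d_2,\Gamma\Rightarrow\Delta$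 / $d,\Gamma\Rightarrow\Delta$; $(\mathrm{sep}R)$ $\Gamma\Rightarrow\Delta,d_1,d_2$ / $\Gamma\Rightarrow\Delta,d$. For a Venn $d$ with $S(d)=\{z\}$, $z=(\{n_1,\dots,n_k\},\{o_1,\dots,o_l\})$: $(\mathrm{dec}L)$ $P_{n_1},\dots,P_{n_k},N_{o_1},\dots,N_{o_l},\Gamma\Rightarrow\Delta$ / $d,\Gamma\Rightarrow\Delta$; $(\mathrm{dec}R)$ $\Gamma\Rightarrow\Delta,P_{n_i}$ ($1\le i\le k$) and $\Gamma\Rightarrow\Delta,N_{o_j}$ ($1\le j\le l$) / $\Gamma\Rightarrow\Delta,d$. For a pure Euler $d=(L,Z)$ such that every $z\in M(d)$ has some $\ell\in L$ with $\mathrm{adj}(z,\ell)\in M(d)$, and $\{c_1,\dots,c_k\}\subseteq L$ the maximal set of contours with $M(d\setminus c_i)\neq\emptyset$: $(\mathrm{red}L)$ $d\setminus c_1,\dots,d\setminus c_k,\Gamma\Rightarrow\Delta$ / $d,\Gamma\Rightarrow\Delta$; $(\mathrm{red}R)$ $\Gamma\Rightarrow\Delta,d\setminus c_i$ ($1\le i\le k$) / $\Gamma\Rightarrow\Delta,d$. For a pure Euler $d=(L,Z)$ with $|M(d)|>1$ and pure Euler $d_1=(L,Z_1)$, $d_2=(L,Z_2)$ with $Z_1\cap Z_2=Z$: $(\mathrm{mzsep}L)$ $d_1,d_2,\Gamma\Rightarrow\Delta$ / $d,\Gamma\Rightarrow\Delta$; $(\mathrm{mzsep}R)$ $\Gamma\Rightarrow\Delta,d_1$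 and $\Gamma\Rightarrow\Delta,d_2$ / $\Gamma\Rightarrow\Delta,d$. For a pure Euler $d$ with $M(d)=\{z\}$, $z=(\{n_1,\dots,n_k\},\{o_1,\dots,o_l\})$: $(\mathrm{impdec}L)$ $d,\Gamma\Rightarrow P_{n_i}$ ($1\le i\le k$) and $P_{o_j},\Gamma\Rightarrow\Delta$ ($1\le j\le l$) / $d,\Gamma\Rightarrow\Delta$; $(\mathrm{impdec}R)$ $P_{n_1},\dots,P_{n_k},\Gamma\Rightarrow P_{o_1},\dots,P_{o_l}$ / $\Gamma\Rightarrow\Delta,d$. For an Euler–Venn $d$: $(\mathrm{det}L)$ $d,\Gamma\Rightarrow E(d)$ and $V(d),\Gamma\Rightarrow\Delta$ / $d,\Gamma\Rightarrow\Delta$; $(\mathrm{det}R)$ $E(d),\Gamma\Rightarrow V(d)$ / $\Gamma\Rightarrow\Delta,d$. A proof of a sequent is a finite tree of rule instances with that sequent at the root and all leaves instances of zero-premiss rules; a sequent is provable if it has a proof. *)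

theory Defs
  imports Main "HOL-Library.Multiset"
begin

text \<open>A Heyting algebra: a bounded distributive lattice with a residuated
implication.  Quantification over all Heyting algebras is rendered by a free
type variable of this class in the main theorem.\<close>

class heyting_algebra = distrib_lattice + bounded_lattice +
  fixes himp :: "'a \<Rightarrow> 'a \<Rightarrow> 'a"
  assumes himp_residuation: "inf c a \<le> b \<longleftrightarrow> c \<le> himp a b"

definition hneg :: "'a::heyting_algebra \<Rightarrow> 'a" where
  "hneg a = himp a bot"

definition bigmeet :: "('b \<Rightarrow> 'a::heyting_algebra) \<Rightarrow> 'b set \<Rightarrow> 'a" where
  "bigmeet f A = Finite_Set.fold (\<lambda>x acc. inf (f x) acc) top A"

definition bigjoin :: "('b \<Rightarrow> 'a::heyting_algebra) \<Rightarrow> 'b set \<Rightarrow> 'a" where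
  "bigjoin f A = Finite_Set.fold (\<lambda>x acc. sup (f x) acc) bot A"

text \<open>Propositional variables (contours): the countably infinite type nat.
A zone is a pair (in, out) of sets of contours.\<close>

type_synonym var = nat
type_synonym zone = "var set \<times> var set"

definition zones :: "var set \<Rightarrow> zone set" where
  "zones L = {(I, J). I \<inter> J = {} \<and> I \<union> J = L}"

definition zin :: "zone \<Rightarrow> var set" where "zin z = fst z"
definition zout :: "zone \<Rightarrow> var set" where "zout z = snd z"

definition adj :: "zone \<Rightarrow> var \<Rightarrow> zone" where
  "adj z c = (if c \<in> zin z then (zin z - {c}, zout z \<union> {c})
              else (zin z \<union> {c}, zout z - {c}))"

definition zred :: "zone \<Rightarrow> var \<Rightarrow> zone" where
  "zred z c = (zin z - {c}, zout z - {c})"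

text \<open>Unitary diagrams.  A Venn diagram (L, Z(L), S) is stored as Venn L S
(its zone set is always Z(L)); a pure Euler diagram (L, Z) as Euler L Z;
an Euler-Venn diagram (L, Z, S) as EulerVenn L Z S.\<close>

datatype udiag =
    Venn "var set" "zone set"
  | Euler "var set" "zone set"
  | EulerVenn "var set" "zone set" "zone set"

datatype cdiag =
    U udiag
  | CAnd cdiag cdiag
  | COr cdiag cdiag
  | CImp cdiag cdiag

fun wf_udiag :: "udiag \<Rightarrow> bool" where
  "wf_udiag (Venn L S) \<longleftrightarrow> finite L \<and> S \<subseteq> zones L"
| "wf_udiag (Euler L Z) \<longleftrightarrow> finite L \<and> Z \<subseteq> zones L"
| "wf_udiag (EulerVenn L Z S) \<longleftrightarrow> finite L \<and> Z \<subseteq> zones L \<and> S \<subseteq> Z"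

fun wf_cdiag :: "cdiag \<Rightarrow> bool" where
  "wf_cdiag (U d) \<longleftrightarrow> wf_udiag d"
| "wf_cdiag (CAnd D E) \<longleftrightarrow> wf_cdiag D \<and> wf_cdiag E"
| "wf_cdiag (COr D E) \<longleftrightarrow> wf_cdiag D \<and> wf_cdiag E"
| "wf_cdiag (CImp D E) \<longleftrightarrow> wf_cdiag D \<and> wf_cdiag E"

definition Bot :: cdiag where "Bot = U (Venn {} {})"
definition Top :: cdiag where "Top = U (Venn {} {({}, {})})"
definition Pos :: "var \<Rightarrow> cdiag" where "Pos c = U (Venn {c} {({c}, {})})"
definition Neg :: "var \<Rightarrow> cdiag" where "Neg c = U (Venn {c} {({}, {c})})"

definition missing :: "var set \<Rightarrow> zone set \<Rightarrow> zone set" where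
  "missing L Z = zones L - Z"

definition ered :: "var set \<Rightarrow> zone set \<Rightarrow> var \<Rightarrow> udiag" where
  "ered L Z c = Euler (L - {c}) ((\<lambda>z. zred z c) ` Z)"

definition zval :: "(var \<Rightarrow> 'a::heyting_algebra) \<Rightarrow> zone \<Rightarrow> 'a" where
  "zval v z = inf (bigmeet v (zin z)) (bigmeet (\<lambda>c. hneg (v c)) (zout z))"

definition mval :: "(var \<Rightarrow> 'a::heyting_algebra) \<Rightarrow> zone \<Rightarrow> 'a" where
  "mval v z = himp (bigmeet v (zin z)) (bigjoin v (zout z))"

fun usem :: "(var \<Rightarrow> 'a::heyting_algebra) \<Rightarrow> udiag \<Rightarrow> 'a" where
  "usem v (Venn L S) = bigjoin (zval v) S"
| "usem v (Euler L Z) = bigmeet (mval v) (missing L Z)"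
| "usem v (EulerVenn L Z S) = himp (bigmeet (mval v) (missing L Z)) (bigjoin (zval v) S)"

fun csem :: "(var \<Rightarrow> 'a::heyting_algebra) \<Rightarrow> cdiag \<Rightarrow> 'a" where
  "csem v (U d) = usem v d"
| "csem v (CAnd D E) = inf (csem v D) (csem v E)"
| "csem v (COr D E) = sup (csem v D) (csem v E)"
| "csem v (CImp D E) = himp (csem v D) (csem v E)"

text \<open>Note: the Euler-Venn clause is [[E(d)]] -> [[V(d)]] unfolded.\<close>

definition valid_in :: "'a::heyting_algebra itself \<Rightarrow> cdiag multiset \<Rightarrow> cdiag multiset \<Rightarrow> bool" where
  "valid_in _ \<Gamma> \<Delta> \<longleftrightarrow>
     (\<forall>v :: var \<Rightarrow> 'a. bigmeet (csem v) (set_mset \<Gamma>) \<le> bigjoin (csem v) (set_mset \<Delta>))"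

inductive provable :: "cdiag multiset \<Rightarrow> cdiag multiset \<Rightarrow> bool" where
  ax: "provable (add_mset (Pos c) \<Gamma>) (add_mset (Pos c) \<Delta>)"
| botL: "provable (add_mset Bot \<Gamma>) \<Delta>"
| topR: "provable \<Gamma> (add_mset Top \<Delta>)"
| andL: "provable (add_mset D (add_mset E \<Gamma>)) \<Delta> \<Longrightarrow> provable (add_mset (CAnd D E) \<Gamma>) \<Delta>"
| orL: "provable (add_mset D \<Gamma>) \<Delta> \<Longrightarrow> provable (add_mset E \<Gamma>) \<Delta> \<Longrightarrow>
         provable (add_mset (COr D E) \<Gamma>) \<Delta>"
| impL: "provable (add_mset (CImp D E) \<Gamma>) {#D#} \<Longrightarrow> provable (add_mset E \<Gamma>) \<Delta> \<Longrightarrow>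
         provable (add_mset (CImp D E) \<Gamma>) \<Delta>"
| andR: "provable \<Gamma> (add_mset D \<Delta>) \<Longrightarrow> provable \<Gamma> (add_mset E \<Delta>) \<Longrightarrow>
         provable \<Gamma> (add_mset (CAnd D E) \<Delta>)"
| orR: "provable \<Gamma> (add_mset D (add_mset E \<Delta>)) \<Longrightarrow> provable \<Gamma> (add_mset (COr D E) \<Delta>)"
| impR: "provable (add_mset D \<Gamma>) {#E#} \<Longrightarrow> provable \<Gamma> (add_mset (CImp D E) \<Delta>)"
| litL: "provable (add_mset (Neg c) \<Gamma>) {#Pos c#} \<Longrightarrow> provable (add_mset (Neg c) \<Gamma>) \<Delta>"
| litR: "provable (add_mset (Pos c) \<Gamma>) {#} \<Longrightarrow> provable \<Gamma> (add_mset (Neg c) \<Delta>)"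
| sepL: "card S > 1 \<Longrightarrow> S1 \<union> S2 = S \<Longrightarrow>
         provable (add_mset (U (Venn L S1)) \<Gamma>) \<Delta> \<Longrightarrow>
         provable (add_mset (U (Venn L S2)) \<Gamma>) \<Delta> \<Longrightarrow>
         provable (add_mset (U (Venn L S)) \<Gamma>) \<Delta>"
| sepR: "card S > 1 \<Longrightarrow> S1 \<union> S2 = S \<Longrightarrow>
         provable \<Gamma> (add_mset (U (Venn L S1)) (add_mset (U (Venn L S2)) \<Delta>)) \<Longrightarrow>
         provable \<Gamma> (add_mset (U (Venn L S)) \<Delta>)"
| decL: "finite (zin z) \<Longrightarrow> finite (zout z) \<Longrightarrow>
         provable (image_mset Pos (mset_set (zin z)) + image_mset Neg (mset_set (zout z)) + \<Gamma>) \<Delta> \<Longrightarrow>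
         provable (add_mset (U (Venn L {z})) \<Gamma>) \<Delta>"
| decR: "(\<forall>n\<in>zin z. provable \<Gamma> (add_mset (Pos n) \<Delta>)) \<Longrightarrow>
         (\<forall>ob\<in>zout z. provable \<Gamma> (add_mset (Neg ob) \<Delta>)) \<Longrightarrow>
         provable \<Gamma> (add_mset (U (Venn L {z})) \<Delta>)"
| redL: "(\<forall>z\<in>missing L Z. \<exists>l\<in>L. adj z l \<in> missing L Z) \<Longrightarrow>
         C = {c \<in> L. missing (L - {c}) ((\<lambda>z. zred z c) ` Z) \<noteq> {}} \<Longrightarrow>
         provable (image_mset (\<lambda>c. U (ered L Z c)) (mset_set C) + \<Gamma>) \<Delta> \<Longrightarrow>
         provable (add_mset (U (Euler L Z)) \<Gamma>) \<Delta>"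
| redR: "(\<forall>z\<in>missing L Z. \<exists>l\<in>L. adj z l \<in> missing L Z) \<Longrightarrow>
         C = {c \<in> L. missing (L - {c}) ((\<lambda>z. zred z c) ` Z) \<noteq> {}} \<Longrightarrow>
         (\<forall>c\<in>C. provable \<Gamma> (add_mset (U (ered L Z c)) \<Delta>)) \<Longrightarrow>
         provable \<Gamma> (add_mset (U (Euler L Z)) \<Delta>)"
| mzsepL: "card (missing L Z) > 1 \<Longrightarrow> Z1 \<subseteq> zones L \<Longrightarrow> Z2 \<subseteq> zones L \<Longrightarrow> Z1 \<inter> Z2 = Z \<Longrightarrow>
         provable (add_mset (U (Euler L Z1)) (add_mset (U (Euler L Z2)) \<Gamma>)) \<Delta> \<Longrightarrow>
         provable (add_mset (U (Euler L Z)) \<Gamma>) \<Delta>"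
| mzsepR: "card (missing L Z) > 1 \<Longrightarrow> Z1 \<subseteq> zones L \<Longrightarrow> Z2 \<subseteq> zones L \<Longrightarrow> Z1 \<inter> Z2 = Z \<Longrightarrow>
         provable \<Gamma> (add_mset (U (Euler L Z1)) \<Delta>) \<Longrightarrow>
         provable \<Gamma> (add_mset (U (Euler L Z2)) \<Delta>) \<Longrightarrow>
         provable \<Gamma> (add_mset (U (Euler L Z)) \<Delta>)"
| impdecL: "missing L Z = {z} \<Longrightarrow>
         (\<forall>n\<in>zin z. provable (add_mset (U (Euler L Z)) \<Gamma>) {#Pos n#}) \<Longrightarrow>
         (\<forall>ob\<in>zout z. provable (add_mset (Pos ob) \<Gamma>) \<Delta>) \<Longrightarrow>
         provable (add_mset (U (Euler L Z)) \<Gamma>) \<Delta>"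
| impdecR: "missing L Z = {z} \<Longrightarrow> finite (zin z) \<Longrightarrow> finite (zout z) \<Longrightarrow>
         provable (image_mset Pos (mset_set (zin z)) + \<Gamma>) (image_mset Pos (mset_set (zout z))) \<Longrightarrow>
         provable \<Gamma> (add_mset (U (Euler L Z)) \<Delta>)"
| detL: "provable (add_mset (U (EulerVenn L Z S)) \<Gamma>) {#U (Euler L Z)#} \<Longrightarrow>
         provable (add_mset (U (Venn L S)) \<Gamma>) \<Delta> \<Longrightarrow>
         provable (add_mset (U (EulerVenn L Z S)) \<Gamma>) \<Delta>"
| detR: "provable (add_mset (U (Euler L Z)) \<Gamma>) {#U (Venn L S)#} \<Longrightarrow>
         provable \<Gamma> (add_mset (U (EulerVenn L Z S)) \<Delta>)"

end

theory Submission
  imports Defs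
begin

text \<open>Every
rule of \<open>C\<close> bounds the value of its principal diagram by a meet, a join or an
implication of the values of the diagrams in its premisses, and each of these shapes
is a sound sequent pattern in any Heyting algebra; soundness follows by induction on
derivations.  Only reduction needs combinatorics of zones.  A missing zone of
\<open>d \<setminus> c\<close> lifts to two missing zones of \<open>d\<close>, inside and outside \<open>c\<close>, and
\<open>(c \<and> i \<rightarrow> p) \<and> (i \<rightarrow> c \<or> p) \<le> (i \<rightarrow> p)\<close> recovers its implication.  Conversely a
missing zone \<open>z\<close> of \<open>d\<close> whose neighbour across \<open>l\<close> is missing too stays missing in
\<open>d \<setminus> l\<close>, where its implication is only weaker.\<close>

section \<open>Heyting algebras and finite meets and joins\<close>

lemma himp_iff: "c \<le> himp a b \<longleftrightarrow> inf c a \<le> b"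
  using himp_residuation by blast

lemma inf_himp_le: "inf a (himp a b) \<le> b"
  using himp_iff[of "himp a b" a b] by (simp add: inf_commute)

lemma himp_mono:
  assumes "a' \<le> a" and "b \<le> b'"
  shows "himp a b \<le> himp a' b'"
proof -
  have "inf (himp a b) a' \<le> inf a (himp a b)"
    using assms(1) by (simp add: le_infI1 le_infI2)
  also have "\<dots> \<le> b" by (rule inf_himp_le)
  also have "\<dots> \<le> b'" by (rule assms(2))
  finally show ?thesis unfolding himp_iff .
qed

lemma inf_himp_inf_himp_sup_le: "inf (himp (inf c i) p) (himp i (sup c p)) \<le> himp i p"
proof -
  define x where "x = inf (inf (himp (inf c i) p) (himp i (sup c p))) i"
  have "x \<le> inf i (himp i (sup c p))"
    unfolding x_def by (auto intro: le_infI1)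
  then have x_le: "x \<le> sup c p"
    using inf_himp_le by (rule order_trans)
  have "inf x c \<le> inf (inf c i) (himp (inf c i) p)"
    unfolding x_def by (auto intro: le_infI1)
  then have x_c_le: "inf x c \<le> p"
    using inf_himp_le by (rule order_trans)
  have "x = inf x (sup c p)"
    using x_le by (simp add: inf_absorb1)
  also have "\<dots> = sup (inf x c) (inf x p)"
    by (rule inf_sup_distrib1)
  also have "\<dots> \<le> p"
    using x_c_le by simp
  finally show ?thesis unfolding himp_iff x_def .
qed

lemma bigmeet_empty [simp]: "bigmeet f {} = top"
  by (simp add: bigmeet_def)

lemma bigjoin_empty [simp]: "bigjoin f {} = bot"
  by (simp add: bigjoin_def)

lemma bigmeet_insert [simp]: "finite A \<Longrightarrow> bigmeet f (insert x A) = inf (f x) (bigmeet f A)"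
proof -
  assume "finite A"
  interpret comp_fun_idem "\<lambda>x acc. inf (f x) acc"
    by unfold_locales (auto simp: fun_eq_iff inf_left_commute)
  show ?thesis unfolding bigmeet_def using \<open>finite A\<close> by simp
qed

lemma bigjoin_insert [simp]: "finite A \<Longrightarrow> bigjoin f (insert x A) = sup (f x) (bigjoin f A)"
proof -
  assume "finite A"
  interpret comp_fun_idem "\<lambda>x acc. sup (f x) acc"
    by unfold_locales (auto simp: fun_eq_iff sup_left_commute)
  show ?thesis unfolding bigjoin_def using \<open>finite A\<close> by simp
qed

lemma le_bigmeet_iff: "finite A \<Longrightarrow> c \<le> bigmeet f A \<longleftrightarrow> (\<forall>x\<in>A. c \<le> f x)"
  by (induction A rule: finite_induct) auto

lemma bigjoin_le_iff: "finite A \<Longrightarrow> bigjoin f A \<le> c \<longleftrightarrow> (\<forall>x\<in>A. f x \<le> c)"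
  by (induction A rule: finite_induct) auto

lemma bigmeet_le: "finite A \<Longrightarrow> x \<in> A \<Longrightarrow> bigmeet f A \<le> f x"
  using le_bigmeet_iff by blast

lemma le_bigjoin: "finite A \<Longrightarrow> x \<in> A \<Longrightarrow> f x \<le> bigjoin f A"
  using bigjoin_le_iff by blast

lemma bigmeet_Un:
  "finite A \<Longrightarrow> finite B \<Longrightarrow> bigmeet f (A \<union> B) = inf (bigmeet f A) (bigmeet f B)"
  by (rule antisym) (auto simp: le_bigmeet_iff intro: le_infI1 le_infI2 bigmeet_le)

lemma bigjoin_Un:
  "finite A \<Longrightarrow> finite B \<Longrightarrow> bigjoin f (A \<union> B) = sup (bigjoin f A) (bigjoin f B)"
  by (rule antisym) (auto simp: bigjoin_le_iff intro: le_supI1 le_supI2 le_bigjoin)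

lemma bigmeet_image: "finite A \<Longrightarrow> bigmeet f (g ` A) = bigmeet (\<lambda>x. f (g x)) A"
  by (rule antisym) (auto simp: le_bigmeet_iff intro: bigmeet_le)

lemma bigjoin_image: "finite A \<Longrightarrow> bigjoin f (g ` A) = bigjoin (\<lambda>x. f (g x)) A"
  by (rule antisym) (auto simp: bigjoin_le_iff intro: le_bigjoin)

lemma bigmeet_antimono: "finite B \<Longrightarrow> A \<subseteq> B \<Longrightarrow> bigmeet f B \<le> bigmeet f A"
  using finite_subset[of A B] by (auto simp: le_bigmeet_iff intro: bigmeet_le)

lemma bigjoin_mono: "finite B \<Longrightarrow> A \<subseteq> B \<Longrightarrow> bigjoin f A \<le> bigjoin f B"
  using finite_subset[of A B] by (auto simp: bigjoin_le_iff intro: le_bigjoin)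

lemma le_sup_bigmeet: "finite A \<Longrightarrow> (\<forall>x\<in>A. g \<le> sup c (f x)) \<Longrightarrow> g \<le> sup c (bigmeet f A)"
  by (induction A rule: finite_induct) (simp_all add: sup_inf_distrib1)

lemma inf_bigjoin_le: "finite A \<Longrightarrow> (\<forall>x\<in>A. inf g (f x) \<le> d) \<Longrightarrow> inf g (bigjoin f A) \<le> d"
  by (induction A rule: finite_induct) (simp_all add: inf_sup_distrib1)

section \<open>Zones and the semantics of diagrams\<close>

lemma finite_zones: "finite L \<Longrightarrow> finite (zones L)"
  by (rule finite_subset[of _ "Pow L \<times> Pow L"]) (auto simp: zones_def)

lemma finite_missing: "finite L \<Longrightarrow> finite (missing L Z)"
  by (simp add: missing_def finite_zones)

lemma finite_zin_zout: "z \<in> zones L \<Longrightarrow> finite L \<Longrightarrow> finite (zin z) \<and> finite (zout z)"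
  by (auto simp: zones_def zin_def zout_def)

lemma zred_in_zones: "z \<in> zones L \<Longrightarrow> zred z c \<in> zones (L - {c})"
  by (auto simp: zones_def zred_def zin_def zout_def)

lemma wf_ered: "finite L \<Longrightarrow> Z \<subseteq> zones L \<Longrightarrow> wf_udiag (ered L Z c)"
  using zred_in_zones[of _ L c] by (auto simp: ered_def)

lemma wf_Pos [simp]: "wf_cdiag (Pos c)"
  by (simp add: Pos_def zones_def)

lemma wf_Neg [simp]: "wf_cdiag (Neg c)"
  by (simp add: Neg_def zones_def)

lemma csem_Bot [simp]: "csem v Bot = bot"
  by (simp add: Bot_def)

lemma csem_Top [simp]: "csem v Top = top"
  by (simp add: Top_def zval_def zin_def zout_def)

lemma csem_Pos [simp]: "csem v (Pos c) = v c"
  by (simp add: Pos_def zval_def zin_def zout_def)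

lemma csem_Neg [simp]: "csem v (Neg c) = hneg (v c)"
  by (simp add: Neg_def zval_def zin_def zout_def)

lemma zval_eq_bigmeet_literals:
  "finite (zin z) \<Longrightarrow> finite (zout z) \<Longrightarrow>
     zval v z = bigmeet (csem v) (Pos ` zin z \<union> Neg ` zout z)"
  by (simp add: zval_def bigmeet_Un bigmeet_image)

lemma mval_eq_himp_literals:
  "finite (zin z) \<Longrightarrow> finite (zout z) \<Longrightarrow>
     mval v z = himp (bigmeet (csem v) (Pos ` zin z)) (bigjoin (csem v) (Pos ` zout z))"
  by (simp add: mval_def bigmeet_image bigjoin_image)

lemma missing_Int: "missing L (Z1 \<inter> Z2) = missing L Z1 \<union> missing L Z2"
  by (auto simp: missing_def)

lemma usem_Euler_Int:
  "finite L \<Longrightarrow> usem v (Euler L (Z1 \<inter> Z2)) = inf (usem v (Euler L Z1)) (usem v (Euler L Z2))"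
  by (simp add: missing_Int bigmeet_Un finite_missing)

section \<open>Reduction of Euler diagrams\<close>

lemma zred_eq_zredD:
  assumes "w \<in> zones L" "z \<in> zones L" "l \<in> L" "zred w l = zred z l"
  shows "w = z \<or> w = adj z l"
proof -
  obtain A B I J where w: "w = (A, B)" and z: "z = (I, J)" by (cases w, cases z)
  have h: "A \<inter> B = {}" "A \<union> B = L" "I \<inter> J = {}" "I \<union> J = L" "A - {l} = I - {l}" "B - {l} = J - {l}"
    using assms by (auto simp: w z zones_def zred_def zin_def zout_def)
  show ?thesis
  proof (cases "l \<in> A \<longleftrightarrow> l \<in> I")
    case True
    then have "A = I" "B = J" using h \<open>l \<in> L\<close> by blast+
    then show ?thesis by (simp add: w z)
  next
    case False
    then have "A = (if l \<in> I then I - {l} else insert l I)"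
      "B = (if l \<in> I then insert l J else J - {l})"
      using h \<open>l \<in> L\<close> by auto
    then show ?thesis by (simp add: w z adj_def zin_def zout_def)
  qed
qed

lemma zred_in_missing_ered:
  assumes Z: "Z \<subseteq> zones L" and z: "z \<in> missing L Z" and l: "l \<in> L"
    and adj: "adj z l \<in> missing L Z"
  shows "zred z l \<in> missing (L - {l}) ((\<lambda>z. zred z l) ` Z)"
proof -
  have zL: "z \<in> zones L" using z by (simp add: missing_def)
  have "zred z l \<notin> (\<lambda>z. zred z l) ` Z"
  proof
    assume "zred z l \<in> (\<lambda>z. zred z l) ` Z"
    then obtain w where w: "w \<in> Z" "zred w l = zred z l" by auto
    then have "w = z \<or> w = adj z l" using zred_eq_zredD Z zL l by blast
    then show False using w z adj by (auto simp: missing_def)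
  qed
  then show ?thesis using zred_in_zones[OF zL] by (simp add: missing_def)
qed

lemma zone_lifts_in_missing:
  assumes z': "z' \<in> missing (L - {c}) ((\<lambda>z. zred z c) ` Z)" and c: "c \<in> L"
  shows "(insert c (zin z'), zout z') \<in> missing L Z" and "(zin z', insert c (zout z')) \<in> missing L Z"
proof -
  obtain I J where z'_eq: "z' = (I, J)" by fastforce
  have IJ: "I \<inter> J = {}" "I \<union> J = L - {c}" and not_red: "(I, J) \<notin> (\<lambda>z. zred z c) ` Z"
    using z' by (auto simp: z'_eq missing_def zones_def)
  have "zred (insert c I, J) c = (I, J)" "zred (I, insert c J) c = (I, J)"
    using IJ by (auto simp: zred_def zin_def zout_def)
  then have "(insert c I, J) \<notin> Z" "(I, insert c J) \<notin> Z"
    using not_red by (metis image_eqI)+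
  moreover have "(insert c I, J) \<in> zones L" "(I, insert c J) \<in> zones L"
    using IJ c by (auto simp: zones_def)
  ultimately show "(insert c (zin z'), zout z') \<in> missing L Z" "(zin z', insert c (zout z')) \<in> missing L Z"
    by (simp_all add: z'_eq missing_def zin_def zout_def)
qed

lemma mval_zred_le: "finite (zin z) \<Longrightarrow> finite (zout z) \<Longrightarrow> mval v (zred z c) \<le> mval v z"
  unfolding mval_def zred_def zin_def zout_def
  by (auto intro!: himp_mono bigmeet_antimono bigjoin_mono)

lemma inf_mval_lifts_le:
  assumes "finite (zin z)" "finite (zout z)"
  shows "inf (mval v (insert c (zin z), zout z)) (mval v (zin z, insert c (zout z))) \<le> mval v z"
  using assms inf_himp_inf_himp_sup_le[of "v c" "bigmeet v (zin z)" "bigjoin v (zout z)"]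
  by (simp add: mval_def zin_def zout_def)

lemma usem_Euler_le_ered:
  assumes L: "finite L" and c: "c \<in> L"
  shows "usem v (Euler L Z) \<le> usem v (ered L Z c)"
proof -
  have "bigmeet (mval v) (missing L Z) \<le> mval v z'"
    if z': "z' \<in> missing (L - {c}) ((\<lambda>z. zred z c) ` Z)" for z'
  proof -
    have "finite (zin z')" "finite (zout z')"
      using z' L finite_zin_zout[of z' "L - {c}"] by (auto simp: missing_def)
    then have "inf (mval v (insert c (zin z'), zout z')) (mval v (zin z', insert c (zout z')))
        \<le> mval v z'"
      by (rule inf_mval_lifts_le)
    then show ?thesis
      using zone_lifts_in_missing[OF z' c] finite_missing[OF L]
      by (meson bigmeet_le le_inf_iff order_trans)
  qed
  then show ?thesis using L by (simp add: ered_def le_bigmeet_iff finite_missing)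
qed

lemma bigmeet_ered_le_usem_Euler:
  assumes L: "finite L" and Z: "Z \<subseteq> zones L"
    and adj: "\<forall>z\<in>missing L Z. \<exists>l\<in>L. adj z l \<in> missing L Z"
  shows "bigmeet (\<lambda>c. usem v (ered L Z c)) {c \<in> L. missing (L - {c}) ((\<lambda>z. zred z c) ` Z) \<noteq> {}}
           \<le> usem v (Euler L Z)"
    (is "bigmeet _ ?C \<le> _")
proof -
  have "bigmeet (\<lambda>c. usem v (ered L Z c)) ?C \<le> mval v z" if z: "z \<in> missing L Z" for z
  proof -
    obtain l where l: "l \<in> L" "adj z l \<in> missing L Z" using adj z by blast
    have red: "zred z l \<in> missing (L - {l}) ((\<lambda>z. zred z l) ` Z)"
      using zred_in_missing_ered[OF Z z l] .
    then have "l \<in> ?C" using l by auto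
    then have "bigmeet (\<lambda>c. usem v (ered L Z c)) ?C \<le> usem v (ered L Z l)"
      using L by (intro bigmeet_le) auto
    also have "\<dots> \<le> mval v (zred z l)"
      using red L by (simp add: ered_def bigmeet_le finite_missing)
    also have "\<dots> \<le> mval v z"
      using z L finite_zin_zout[of z L] by (simp add: missing_def mval_zred_le)
    finally show ?thesis .
  qed
  then show ?thesis using L by (simp add: le_bigmeet_iff finite_missing)
qed

section \<open>Soundness\<close>

lemma valid_in_left_conj:
  assumes "\<And>v :: var \<Rightarrow> 'a. csem v D \<le> bigmeet (csem v) (set_mset Ds)"
    and "valid_in TYPE('a) (Ds + \<Gamma>) \<Delta>"
  shows "valid_in TYPE('a::heyting_algebra) (add_mset D \<Gamma>) \<Delta>"
  unfolding valid_in_def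
proof
  fix v :: "var \<Rightarrow> 'a"
  have "inf (csem v D) (bigmeet (csem v) (set_mset \<Gamma>))
      \<le> inf (bigmeet (csem v) (set_mset Ds)) (bigmeet (csem v) (set_mset \<Gamma>))"
    using assms(1) by (rule inf_mono) simp
  also have "\<dots> \<le> bigjoin (csem v) (set_mset \<Delta>)"
    using assms(2) by (simp add: valid_in_def bigmeet_Un)
  finally show "bigmeet (csem v) (set_mset (add_mset D \<Gamma>)) \<le> bigjoin (csem v) (set_mset \<Delta>)"
    by simp
qed

lemma valid_in_left_disj:
  assumes "\<And>v :: var \<Rightarrow> 'a. csem v D \<le> bigjoin (csem v) Es" and "finite Es"
    and "\<forall>E\<in>Es. valid_in TYPE('a) (add_mset E \<Gamma>) \<Delta>"
  shows "valid_in TYPE('a::heyting_algebra) (add_mset D \<Gamma>) \<Delta>"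
  unfolding valid_in_def
proof
  fix v :: "var \<Rightarrow> 'a"
  have "inf (csem v D) (bigmeet (csem v) (set_mset \<Gamma>))
      \<le> inf (bigmeet (csem v) (set_mset \<Gamma>)) (bigjoin (csem v) Es)"
    using assms(1) by (simp add: le_infI1 le_infI2)
  also have "\<dots> \<le> bigjoin (csem v) (set_mset \<Delta>)"
    using assms(2,3) by (intro inf_bigjoin_le) (auto simp: valid_in_def inf_commute)
  finally show "bigmeet (csem v) (set_mset (add_mset D \<Gamma>)) \<le> bigjoin (csem v) (set_mset \<Delta>)"
    by simp
qed

lemma valid_in_left_imp:
  assumes "\<And>v :: var \<Rightarrow> 'a. csem v F \<le> himp (bigmeet (csem v) As) (bigjoin (csem v) Bs)"
    and "finite As" "finite Bs"
    and "\<forall>A\<in>As. valid_in TYPE('a) (add_mset F \<Gamma>) {#A#}"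
    and "\<forall>B\<in>Bs. valid_in TYPE('a) (add_mset B \<Gamma>) \<Delta>"
  shows "valid_in TYPE('a::heyting_algebra) (add_mset F \<Gamma>) \<Delta>"
  unfolding valid_in_def
proof
  fix v :: "var \<Rightarrow> 'a"
  define x where "x = inf (csem v F) (bigmeet (csem v) (set_mset \<Gamma>))"
  have "x \<le> bigmeet (csem v) As"
    using assms(2,4) by (simp add: x_def valid_in_def le_bigmeet_iff)
  moreover have "x \<le> himp (bigmeet (csem v) As) (bigjoin (csem v) Bs)"
    using assms(1) by (simp add: x_def le_infI1)
  ultimately have "x \<le> bigjoin (csem v) Bs"
    by (meson himp_iff le_inf_iff order_refl order_trans)
  moreover have "inf x (bigjoin (csem v) Bs) \<le> bigjoin (csem v) (set_mset \<Delta>)"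
  proof (rule inf_bigjoin_le[OF assms(3)], intro ballI)
    fix B assume "B \<in> Bs"
    then have "inf (csem v B) (bigmeet (csem v) (set_mset \<Gamma>)) \<le> bigjoin (csem v) (set_mset \<Delta>)"
      using assms(5) by (simp add: valid_in_def)
    then show "inf x (csem v B) \<le> bigjoin (csem v) (set_mset \<Delta>)"
      by (simp add: x_def le_infI1 le_infI2 order_trans[rotated])
  qed
  ultimately show "bigmeet (csem v) (set_mset (add_mset F \<Gamma>)) \<le> bigjoin (csem v) (set_mset \<Delta>)"
    by (simp add: x_def inf_absorb1)
qed

lemma valid_in_right_disj:
  assumes "\<And>v :: var \<Rightarrow> 'a. bigjoin (csem v) (set_mset Ds) \<le> csem v D"
    and "valid_in TYPE('a) \<Gamma> (Ds + \<Delta>)"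
  shows "valid_in TYPE('a::heyting_algebra) \<Gamma> (add_mset D \<Delta>)"
  using assms unfolding valid_in_def
  by (simp add: bigjoin_Un) (meson order_trans sup_mono order_refl)

lemma valid_in_right_conj:
  assumes "\<And>v :: var \<Rightarrow> 'a. bigmeet (csem v) Es \<le> csem v D" and "finite Es"
    and "\<forall>E\<in>Es. valid_in TYPE('a) \<Gamma> (add_mset E \<Delta>)"
  shows "valid_in TYPE('a::heyting_algebra) \<Gamma> (add_mset D \<Delta>)"
  unfolding valid_in_def
proof
  fix v :: "var \<Rightarrow> 'a"
  have "bigmeet (csem v) (set_mset \<Gamma>) \<le> sup (bigjoin (csem v) (set_mset \<Delta>)) (bigmeet (csem v) Es)"
    using assms(2,3) by (intro le_sup_bigmeet) (auto simp: valid_in_def sup_commute)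
  also have "\<dots> \<le> sup (bigjoin (csem v) (set_mset \<Delta>)) (csem v D)"
    using assms(1) by (rule sup_mono[OF order_refl])
  finally show "bigmeet (csem v) (set_mset \<Gamma>) \<le> bigjoin (csem v) (set_mset (add_mset D \<Delta>))"
    by (simp add: sup_commute)
qed

lemma valid_in_right_imp:
  assumes "\<And>v :: var \<Rightarrow> 'a.
      himp (bigmeet (csem v) (set_mset As)) (bigjoin (csem v) (set_mset Bs)) \<le> csem v F"
    and "valid_in TYPE('a) (As + \<Gamma>) Bs"
  shows "valid_in TYPE('a::heyting_algebra) \<Gamma> (add_mset F \<Delta>)"
  unfolding valid_in_def
proof
  fix v :: "var \<Rightarrow> 'a"
  have "bigmeet (csem v) (set_mset \<Gamma>) \<le> himp (bigmeet (csem v) (set_mset As)) (bigjoin (csem v) (set_mset Bs))"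
    using assms(2) by (simp add: valid_in_def himp_iff bigmeet_Un inf_commute)
  also have "\<dots> \<le> csem v F" by (rule assms(1))
  finally show "bigmeet (csem v) (set_mset \<Gamma>) \<le> bigjoin (csem v) (set_mset (add_mset F \<Delta>))"
    by (simp add: le_supI1)
qed

lemma provable_valid_in:
  "provable \<Gamma> \<Delta> \<Longrightarrow> \<forall>D\<in>#\<Gamma> + \<Delta>. wf_cdiag D \<Longrightarrow> valid_in TYPE('a::heyting_algebra) \<Gamma> \<Delta>"
proof (induction rule: provable.induct)
  case (ax c \<Gamma> \<Delta>)
  show ?case by (simp add: valid_in_def le_supI1 le_infI1)
next
  case (botL \<Gamma> \<Delta>)
  show ?case by (simp add: valid_in_def)
next
  case (topR \<Gamma> \<Delta>)
  show ?case by (simp add: valid_in_def)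
next
  case (andL D E \<Gamma> \<Delta>)
  show ?case by (rule valid_in_left_conj[where Ds = "{#D, E#}"]) (use andL in auto)
next
  case (orL D \<Gamma> \<Delta> E)
  show ?case by (rule valid_in_left_disj[where Es = "{D, E}"]) (use orL in auto)
next
  case (impL D E \<Gamma> \<Delta>)
  show ?case by (rule valid_in_left_imp[where As = "{D}" and Bs = "{E}"]) (use impL in auto)
next
  case (andR \<Gamma> D \<Delta> E)
  show ?case by (rule valid_in_right_conj[where Es = "{D, E}"]) (use andR in auto)
next
  case (orR \<Gamma> D E \<Delta>)
  show ?case by (rule valid_in_right_disj[where Ds = "{#D, E#}"]) (use orR in auto)
next
  case (impR D \<Gamma> E \<Delta>)
  show ?case by (rule valid_in_right_imp[where As = "{#D#}" and Bs = "{#E#}"]) (use impR in auto)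
next
  case (litL c \<Gamma> \<Delta>)
  show ?case
    by (rule valid_in_left_imp[where As = "{Pos c}" and Bs = "{}"])
      (use litL in \<open>auto simp: hneg_def\<close>)
next
  case (litR c \<Gamma> \<Delta>)
  show ?case
    by (rule valid_in_right_imp[where As = "{#Pos c#}" and Bs = "{#}"])
      (use litR in \<open>auto simp: hneg_def\<close>)
next
  case (sepL S S1 S2 L \<Gamma> \<Delta>)
  have "finite S" using \<open>card S > 1\<close> by (metis card.infinite not_one_less_zero)
  then have fin: "finite S1" "finite S2" using sepL.hyps(2) by auto
  show ?case
    by (rule valid_in_left_disj[where Es = "{U (Venn L S1), U (Venn L S2)}"])
      (use sepL fin in \<open>auto simp: bigjoin_Un\<close>)
next
  case (sepR S S1 S2 \<Gamma> L \<Delta>)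
  have "finite S" using \<open>card S > 1\<close> by (metis card.infinite not_one_less_zero)
  then have fin: "finite S1" "finite S2" using sepR.hyps(2) by auto
  show ?case
    by (rule valid_in_right_disj[where Ds = "{#U (Venn L S1), U (Venn L S2)#}"])
      (use sepR fin in \<open>auto simp: bigjoin_Un\<close>)
next
  case (decL z \<Gamma> \<Delta> L)
  show ?case
    by (rule valid_in_left_conj
        [where Ds = "image_mset Pos (mset_set (zin z)) + image_mset Neg (mset_set (zout z))"])
      (use decL in \<open>auto simp: zval_eq_bigmeet_literals ball_Un\<close>)
next
  case (decR z \<Gamma> \<Delta> L)
  have fin: "finite (zin z)" "finite (zout z)" using decR.prems finite_zin_zout[of z L] by auto
  show ?case
    by (rule valid_in_right_conj[where Es = "Pos ` zin z \<union> Neg ` zout z"])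
      (use decR fin in \<open>auto simp: zval_eq_bigmeet_literals\<close>)
next
  case (redL L Z C \<Gamma> \<Delta>)
  have fin: "finite C" "C \<subseteq> L" using redL by auto
  show ?case
    by (rule valid_in_left_conj[where Ds = "image_mset (\<lambda>c. U (ered L Z c)) (mset_set C)"])
      (use redL fin in \<open>auto simp: le_bigmeet_iff usem_Euler_le_ered wf_ered ball_Un
        simp del: usem.simps\<close>)
next
  case (redR L Z C \<Gamma> \<Delta>)
  have fin: "finite C" using redR by auto
  show ?case
    by (rule valid_in_right_conj[where Es = "(\<lambda>c. U (ered L Z c)) ` C"])
      (use redR fin in \<open>auto simp: bigmeet_image bigmeet_ered_le_usem_Euler wf_ered
        simp del: usem.simps\<close>)
next
  case (mzsepL L Z Z1 Z2 \<Gamma> \<Delta>)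
  show ?case
    by (rule valid_in_left_conj[where Ds = "{#U (Euler L Z1), U (Euler L Z2)#}"])
      (use mzsepL in \<open>auto simp: usem_Euler_Int simp del: usem.simps\<close>)
next
  case (mzsepR L Z Z1 Z2 \<Gamma> \<Delta>)
  show ?case
    by (rule valid_in_right_conj[where Es = "{U (Euler L Z1), U (Euler L Z2)}"])
      (use mzsepR in \<open>auto simp: usem_Euler_Int simp del: usem.simps\<close>)
next
  case (impdecL L Z z \<Gamma> \<Delta>)
  have fin: "finite (zin z)" "finite (zout z)"
    using impdecL finite_zin_zout[of z L] by (auto simp: missing_def)
  show ?case
    by (rule valid_in_left_imp[where As = "Pos ` zin z" and Bs = "Pos ` zout z"])
      (use impdecL fin in \<open>auto simp: mval_eq_himp_literals\<close>)
next
  case (impdecR L Z z \<Gamma> \<Delta>)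
  show ?case
    by (rule valid_in_right_imp
        [where As = "image_mset Pos (mset_set (zin z))" and Bs = "image_mset Pos (mset_set (zout z))"])
      (use impdecR in \<open>auto simp: mval_eq_himp_literals ball_Un\<close>)
next
  case (detL L Z S \<Gamma> \<Delta>)
  show ?case
    by (rule valid_in_left_imp[where As = "{U (Euler L Z)}" and Bs = "{U (Venn L S)}"])
      (use detL in auto)
next
  case (detR L Z \<Gamma> S \<Delta>)
  show ?case
    by (rule valid_in_right_imp[where As = "{#U (Euler L Z)#}" and Bs = "{#U (Venn L S)#}"])
      (use detR in auto)
qed

theorem theorem1:
  assumes "\<forall>D \<in># \<Gamma> + \<Delta>. wf_cdiag D"
    and "provable \<Gamma> \<Delta>"
  shows "valid_in TYPE('a::heyting_algebra) \<Gamma> \<Delta>"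
  using provable_valid_in[OF assms(2,1)] .

end
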